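(* Let $S=(-1,1)^2$ and let $W\ge1$ be an integer. For a polynomial $$u(\xi,\eta)=\sum_{i=0}^{W}\sum_{j=0}^{W}a_{i,j}L_i(\xi)L_j(\eta)$$ (real coefficients $a_{i,j}$, $L_i$ the Legendre polynomial of degree $i$), define the quadratic forms $$\mathcal{B}(u)=\|u\|_{H^4(S)}^2=\int_S\sum_{|\alpha|\le 4}|D^{\alpha}_{\xi,\eta}u|^2\,d\xi\,d\eta$$ and $$\mathcal{C}(u)=\int_S\left(u_{\xi\xi\xi\xi}^2+u_{\eta\eta\eta\eta}^2+u_{\xi\xi\xi}^2+u_{\eta\eta\eta}^2+u_{\xi\xi}^2+u_{\eta\eta}^2+u_{\xi}^2+u_{\eta}^2+u^2\right)d\xi\,d\eta.$$ Then $\mathcal{B}$ and $\mathcal{C}$ are spectrally equivalent: there is a constant $M>0$ independent of $W$ such that for every such polynomial $u$, $$\frac{1}{M}\,\mathcal{B}(u)\le \mathcal{C}(u)\le \mathcal{B}(u).$$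
   Context: Subscripts denote partial derivatives, e.g. $u_{\xi\eta\eta}=\partial^3u/\partial\xi\,\partial\eta^2$; $D^{\alpha}_{\xi,\eta}$ is the partial derivative with multi-index $\alpha=(\alpha_1,\alpha_2)$, $|\alpha|=\alpha_1+\alpha_2$. *)

theory Defs
  imports "HOL-Analysis.Analysis" "HOL-Computational_Algebra.Polynomial"
begin

definition legendre :: "nat \<Rightarrow> real poly" where
  "legendre n = smult (1 / (2 ^ n * fact n)) ((pderiv ^^ n) ([:-1, 0, 1:] ^ n))"

definition sq :: "(real \<times> real) set" where
  "sq = box (-1, -1) (1, 1)"

definition legU :: "nat \<Rightarrow> (nat \<Rightarrow> nat \<Rightarrow> real) \<Rightarrow> real \<times> real \<Rightarrow> real" where
  "legU W a p = (\<Sum>i\<le>W. \<Sum>j\<le>W. a i j * poly (legendre i) (fst p) * poly (legendre j) (snd p))"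

definition legD :: "nat \<Rightarrow> (nat \<Rightarrow> nat \<Rightarrow> real) \<Rightarrow> nat \<Rightarrow> nat \<Rightarrow> real \<times> real \<Rightarrow> real" where
  "legD W a k l p = (\<Sum>i\<le>W. \<Sum>j\<le>W. a i j * poly ((pderiv ^^ k) (legendre i)) (fst p)
                                        * poly ((pderiv ^^ l) (legendre j)) (snd p))"

definition formB :: "nat \<Rightarrow> (nat \<Rightarrow> nat \<Rightarrow> real) \<Rightarrow> real" where
  "formB W a = integral sq (\<lambda>p. \<Sum>k\<le>4. \<Sum>l\<le>4 - k. (legD W a k l p)\<^sup>2)"

definition formC :: "nat \<Rightarrow> (nat \<Rightarrow> nat \<Rightarrow> real) \<Rightarrow> real" where
  "formC W a = integral sq (\<lambda>p. (legD W a 0 0 p)\<^sup>2 +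
      (\<Sum>k\<in>{1..4}. (legD W a k 0 p)\<^sup>2 + (legD W a 0 k p)\<^sup>2))"

lemma legD_0_0: "legD W a 0 0 = legU W a"
  by (simp add: legD_def legU_def fun_eq_iff)

end

theory Submission
  imports Defs
begin

text \<open>A polynomial \<open>u\<close> on \<open>(-1,1)\<^sup>2\<close> is extended to \<open>U = (E \<otimes> E) u\<close> on \<open>(-3,3)\<^sup>2\<close>, where the
  one-dimensional extension \<open>E\<close> multiplies a higher-order reflection of \<open>f\<close> by a cutoff on each outer
  interval: \<open>E f\<close> is \<open>C\<^sup>3\<close> across \<open>\<plusminus>1\<close>, vanishes to third order at \<open>\<plusminus>3\<close>, and the \<open>L\<^sup>2\<close> norm of
  its \<open>m\<close>-th derivative is bounded by the \<open>H\<^sup>m(-1,1)\<close> norm of \<open>f\<close>. Hence integrating \<open>U\<close> by parts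
  produces no boundary terms, so each mixed norm \<open>\<parallel>\<partial>\<^sub>x\<^sup>k \<partial>\<^sub>y\<^sup>l U\<parallel>\<^sup>2\<close> (\<open>k, l \<ge> 1\<close>, \<open>k + l \<le> 4\<close>)
  equals \<open>\<plusminus>(\<partial>\<^sub>x\<^sup>p \<partial>\<^sub>y\<^sup>q U, \<partial>\<^sub>x\<^sup>p\<^sup>' \<partial>\<^sub>y\<^sup>q\<^sup>' U)\<close> with the \<open>x\<close>- and \<open>y\<close>-derivatives moved apart, and
  AM-GM, used at most twice, bounds it by pure norms \<open>\<parallel>\<partial>\<^sub>x\<^sup>p U\<parallel>\<^sup>2\<close>, \<open>\<parallel>\<partial>\<^sub>y\<^sup>q U\<parallel>\<^sup>2\<close>, \<open>p, q \<le> 4\<close>.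
  Applying the continuity of \<open>E\<close> in one variable at a time bounds these by the pure norms of \<open>u\<close>,
  whose sum is \<open>formC\<close>; and the mixed norms of \<open>u\<close> are dominated by those of \<open>U\<close>. Nothing about the
  Legendre basis beyond polynomiality is used.\<close>

lemma integrable_Icc_if_continuous:
  "continuous_on UNIV (f :: real \<Rightarrow> real) \<Longrightarrow> f integrable_on {a..b}"
  by (rule integrable_continuous_real, erule continuous_on_subset, simp)

lemma integral_sq_poly_nonneg: "0 \<le> integral {a..b} (\<lambda>x. (poly (p :: real poly) x)\<^sup>2)"
  by (rule Henstock_Kurzweil_Integration.integral_nonneg)
    (auto intro!: integrable_Icc_if_continuous continuous_intros)

lemma integral_poly_pderiv:
  fixes p :: "real poly"
  assumes "a \<le> b"
  shows "integral {a..b} (poly (pderiv p)) = poly p b - poly p a"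
proof -
  have "(poly (pderiv p) has_integral (poly p b - poly p a)) {a..b}"
    by (rule fundamental_theorem_of_calculus[OF assms])
      (metis has_field_derivative_at_within has_real_derivative_iff_has_vector_derivative poly_DERIV)
  then show ?thesis by (rule integral_unique)
qed

lemma integral_poly_by_parts:
  fixes p q :: "real poly"
  assumes "a \<le> b"
  shows "integral {a..b} (\<lambda>x. poly p x * poly (pderiv q) x) =
    poly p b * poly q b - poly p a * poly q a - integral {a..b} (\<lambda>x. poly (pderiv p) x * poly q x)"
proof -
  have "poly (pderiv (p * q)) = (\<lambda>x. poly p x * poly (pderiv q) x + poly (pderiv p) x * poly q x)"
    by (simp add: pderiv_mult algebra_simps fun_eq_iff)
  then have "integral {a..b} (poly (pderiv (p * q))) =
      integral {a..b} (\<lambda>x. poly p x * poly (pderiv q) x) + integral {a..b} (\<lambda>x. poly (pderiv p) x * poly q x)"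
    by (simp add: integral_add integrable_Icc_if_continuous continuous_intros)
  then show ?thesis using integral_poly_pderiv[OF assms, of "p * q"] by simp
qed

lemma integral_comp_reflect_scale:
  fixes g :: "real \<Rightarrow> real"
  assumes g: "continuous_on UNIV g" and m: "m > 0" and ab: "a \<le> b"
    and range: "\<forall>x\<in>{a..b}. c - m * x \<in> {-1..1}"
  shows "integral {a..b} (\<lambda>x. g (c - m * x)) = (1 / m) * integral {c - m * b..c - m * a} g"
proof -
  define G where "G t = integral {-2..t} g" for t
  have G_deriv: "(G has_real_derivative g t) (at t)" if "t \<in> {-1..1}" for t
  proof -
    have "(G has_real_derivative g t) (at t within {-2..2})" unfolding G_def
      by (rule integral_has_real_derivative) (use that g in \<open>auto intro: continuous_on_subset\<close>)
    moreover have "at t within {-2..2} = at t" using that by (intro at_within_Icc_at) auto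
    ultimately show ?thesis by simp
  qed
  have "((\<lambda>x. g (c - m * x)) has_integral (- (1 / m) * G (c - m * b) - - (1 / m) * G (c - m * a))) {a..b}"
  proof (rule fundamental_theorem_of_calculus[OF ab])
    fix x assume x: "x \<in> {a..b}"
    have "((\<lambda>x. - (1 / m) * G (c - m * x)) has_real_derivative - (1 / m) * (g (c - m * x) * - m)) (at x)"
      by (intro DERIV_cmult DERIV_chain2[OF G_deriv]) (use range x in \<open>auto intro!: derivative_eq_intros\<close>)
    moreover have "- (1 / m) * (g (c - m * x) * - m) = g (c - m * x)" using m by simp
    ultimately show "((\<lambda>x. - (1 / m) * G (c - m * x)) has_vector_derivative g (c - m * x)) (at x within {a..b})"
      by (metis has_field_derivative_at_within has_real_derivative_iff_has_vector_derivative)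
  qed
  then have "integral {a..b} (\<lambda>x. g (c - m * x)) = (1 / m) * (G (c - m * a) - G (c - m * b))"
    by (simp add: integral_unique algebra_simps)
  also have "G (c - m * a) - G (c - m * b) = integral {c - m * b..c - m * a} g"
  proof -
    have "c - m * a \<in> {-1..1}" "c - m * b \<in> {-1..1}" "m * a \<le> m * b"
      using range ab m by (auto simp: mult_left_mono)
    then have "integral {-2..c - m * b} g + integral {c - m * b..c - m * a} g = integral {-2..c - m * a} g"
      by (intro Henstock_Kurzweil_Integration.integral_combine integrable_Icc_if_continuous g) auto
    then show ?thesis unfolding G_def by simp
  qed
  finally show ?thesis .
qed

lemma higher_pderiv_Suc: "(pderiv ^^ Suc k) p = (pderiv ^^ k) (pderiv p)"
  by (metis funpow_Suc_right comp_apply)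

lemma higher_pderiv_diff:
  "(pderiv ^^ k) (p - q) = (pderiv ^^ k) p - (pderiv ^^ k) (q :: 'a :: idom poly)"
  by (induct k arbitrary: p q) (simp_all del: funpow.simps add: higher_pderiv_Suc pderiv_diff)

lemma higher_pderiv_1: "k \<ge> 1 \<Longrightarrow> (pderiv ^^ k) (1 :: 'a :: idom poly) = 0"
  by (cases k) (simp_all del: funpow.simps add: higher_pderiv_Suc)

lemma higher_pderiv_pcompose_linear:
  "(pderiv ^^ k) (pcompose p [:b, s:]) = smult (s ^ k) (pcompose ((pderiv ^^ k) p) [:b, s :: 'a :: idom:])"
proof (induct k)
  case (Suc k)
  then show ?case
    by (simp add: pderiv_smult pderiv_pcompose pderiv_pCons mult.commute smult_smult)
qed simp

lemma poly_higher_pderiv_mult_eq_0: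
  fixes \<rho> g :: "'a :: idom poly"
  assumes "\<forall>i\<le>n. poly ((pderiv ^^ i) \<rho>) x0 = 0"
  shows "poly ((pderiv ^^ n) (\<rho> * g)) x0 = 0"
  using assms
proof (induct n arbitrary: \<rho> g)
  case (Suc n)
  have "(pderiv ^^ Suc n) (\<rho> * g) = (pderiv ^^ n) (pderiv \<rho> * g) + (pderiv ^^ n) (\<rho> * pderiv g)"
    by (simp del: funpow.simps add: higher_pderiv_Suc pderiv_mult higher_pderiv_add algebra_simps)
  moreover have "\<forall>i\<le>n. poly ((pderiv ^^ i) (pderiv \<rho>)) x0 = 0"
    using Suc.prems by (auto simp flip: higher_pderiv_Suc)
  ultimately show ?case using Suc by simp
qed simp

lemma poly_higher_pderiv_mult_eq:
  fixes \<rho> g :: "'a :: idom poly"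
  assumes "poly \<rho> x0 = 1" "\<forall>i. 1 \<le> i \<and> i \<le> n \<longrightarrow> poly ((pderiv ^^ i) \<rho>) x0 = 0"
  shows "poly ((pderiv ^^ n) (\<rho> * g)) x0 = poly ((pderiv ^^ n) g) x0"
proof -
  have "\<forall>i\<le>n. poly ((pderiv ^^ i) (\<rho> - 1)) x0 = 0"
  proof (intro allI impI)
    fix i assume "i \<le> n"
    then show "poly ((pderiv ^^ i) (\<rho> - 1)) x0 = 0"
      using assms by (cases "i = 0") (simp_all add: higher_pderiv_diff higher_pderiv_1)
  qed
  from poly_higher_pderiv_mult_eq_0[OF this, of g] show ?thesis
    by (simp add: algebra_simps higher_pderiv_diff)
qed

definition sobolev_sq :: "real \<Rightarrow> real \<Rightarrow> nat \<Rightarrow> real poly \<Rightarrow> real" where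
  "sobolev_sq a b n g = (\<Sum>i\<le>n. integral {a..b} (\<lambda>x. (poly ((pderiv ^^ i) g) x)\<^sup>2))"

lemma sobolev_sq_le_Suc: "sobolev_sq a b n g \<le> sobolev_sq a b (Suc n) g"
  by (simp add: sobolev_sq_def integral_sq_poly_nonneg)

lemma sobolev_sq_pderiv_le_Suc: "sobolev_sq a b n (pderiv g) \<le> sobolev_sq a b (Suc n) g"
  unfolding sobolev_sq_def sum.atMost_Suc_shift
  by (simp del: funpow.simps sum.atMost_Suc add: higher_pderiv_Suc integral_sq_poly_nonneg)

lemma integral_sq_poly_mult_le:
  fixes \<rho> :: "real poly"
  shows "\<exists>K\<ge>0. \<forall>g. integral {a..b} (\<lambda>x. (poly (\<rho> * g) x)\<^sup>2) \<le> K * integral {a..b} (\<lambda>x. (poly g x)\<^sup>2)"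
proof -
  have "bounded (poly \<rho> ` {a..b})"
    by (intro compact_imp_bounded compact_continuous_image) (auto intro!: continuous_intros)
  then obtain B where B: "\<forall>x\<in>{a..b}. \<bar>poly \<rho> x\<bar> \<le> B" unfolding bounded_pos by auto
  then have "(poly \<rho> x)\<^sup>2 \<le> B\<^sup>2" if "x \<in> {a..b}" for x
    using that abs_le_square_iff by force
  then have "integral {a..b} (\<lambda>x. (poly (\<rho> * g) x)\<^sup>2) \<le> integral {a..b} (\<lambda>x. B\<^sup>2 * (poly g x)\<^sup>2)" for g
    by (intro integral_le) (auto simp: power_mult_distrib mult_right_mono
        intro!: integrable_Icc_if_continuous continuous_intros)
  then show ?thesis by (intro exI[of _ "B\<^sup>2"]) simp
qed

lemma integral_sq_poly_add_le:
  fixes p q :: "real poly"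
  shows "integral {a..b} (\<lambda>x. (poly (p + q) x)\<^sup>2)
    \<le> 2 * integral {a..b} (\<lambda>x. (poly p x)\<^sup>2) + 2 * integral {a..b} (\<lambda>x. (poly q x)\<^sup>2)"
proof -
  have "(poly (p + q) x)\<^sup>2 \<le> 2 * (poly p x)\<^sup>2 + 2 * (poly q x)\<^sup>2" for x
    using sum_squares_ge_zero[of "poly p x - poly q x" 0] by (simp add: power2_eq_square algebra_simps)
  then have "integral {a..b} (\<lambda>x. (poly (p + q) x)\<^sup>2) \<le> integral {a..b} (\<lambda>x. 2 * (poly p x)\<^sup>2 + 2 * (poly q x)\<^sup>2)"
    by (intro integral_le) (auto intro!: integrable_Icc_if_continuous continuous_intros)
  also have "\<dots> = 2 * integral {a..b} (\<lambda>x. (poly p x)\<^sup>2) + 2 * integral {a..b} (\<lambda>x. (poly q x)\<^sup>2)"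
    by (subst integral_add) (auto intro!: integrable_Icc_if_continuous continuous_intros)
  finally show ?thesis .
qed

lemma integral_sq_higher_pderiv_mult_le:
  fixes \<rho> :: "real poly"
  shows "\<exists>K\<ge>0. \<forall>g. integral {a..b} (\<lambda>x. (poly ((pderiv ^^ n) (\<rho> * g)) x)\<^sup>2) \<le> K * sobolev_sq a b n g"
proof (induct n arbitrary: \<rho>)
  case 0
  then show ?case using integral_sq_poly_mult_le[of a b \<rho>] by (simp add: sobolev_sq_def)
next
  case (Suc n)
  obtain K1 where K1: "K1 \<ge> 0"
    "\<And>g. integral {a..b} (\<lambda>x. (poly ((pderiv ^^ n) (pderiv \<rho> * g)) x)\<^sup>2) \<le> K1 * sobolev_sq a b n g"
    using Suc[of "pderiv \<rho>"] by blast
  obtain K2 where K2: "K2 \<ge> 0"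
    "\<And>g. integral {a..b} (\<lambda>x. (poly ((pderiv ^^ n) (\<rho> * g)) x)\<^sup>2) \<le> K2 * sobolev_sq a b n g"
    using Suc[of \<rho>] by blast
  have "integral {a..b} (\<lambda>x. (poly ((pderiv ^^ Suc n) (\<rho> * g)) x)\<^sup>2) \<le> (2 * K1 + 2 * K2) * sobolev_sq a b (Suc n) g" for g
  proof -
    have "(pderiv ^^ Suc n) (\<rho> * g) = (pderiv ^^ n) (pderiv \<rho> * g) + (pderiv ^^ n) (\<rho> * pderiv g)"
      by (simp del: funpow.simps add: higher_pderiv_Suc pderiv_mult higher_pderiv_add algebra_simps)
    then have "integral {a..b} (\<lambda>x. (poly ((pderiv ^^ Suc n) (\<rho> * g)) x)\<^sup>2)
        \<le> 2 * integral {a..b} (\<lambda>x. (poly ((pderiv ^^ n) (pderiv \<rho> * g)) x)\<^sup>2)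
          + 2 * integral {a..b} (\<lambda>x. (poly ((pderiv ^^ n) (\<rho> * pderiv g)) x)\<^sup>2)"
      by (simp only: integral_sq_poly_add_le)
    also have "\<dots> \<le> 2 * (K1 * sobolev_sq a b n g) + 2 * (K2 * sobolev_sq a b n (pderiv g))"
      using K1(2)[of g] K2(2)[of "pderiv g"] by linarith
    also have "\<dots> \<le> 2 * (K1 * sobolev_sq a b (Suc n) g) + 2 * (K2 * sobolev_sq a b (Suc n) g)"
      using mult_left_mono[OF sobolev_sq_le_Suc K1(1)] mult_left_mono[OF sobolev_sq_pderiv_le_Suc K2(1)]
      by (intro add_mono) auto
    finally show ?thesis by (simp add: algebra_simps)
  qed
  then show ?case using K1(1) K2(1) by (intro exI[of _ "2 * K1 + 2 * K2"]) auto
qed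

section \<open>A one-dimensional extension operator\<close>

text \<open>Two-point Hermite interpolants of degree 7: each equals 1 to third order at the inner endpoint
  \<open>\<plusminus>1\<close> and vanishes to third order at the outer endpoint \<open>\<plusminus>3\<close>.\<close>

definition cutoff_right :: "real poly" where
  "cutoff_right = [:-81/16, 945/32, -945/16, 1995/32, -595/16, 399/32, -35/16, 5/32:]"

definition cutoff_left :: "real poly" where
  "cutoff_left = [:-81/16, -945/32, -945/16, -1995/32, -595/16, -399/32, -35/16, -5/32:]"

lemma cutoff_right_at_1:
  "poly cutoff_right 1 = 1" "\<forall>i. 1 \<le> i \<and> i \<le> 3 \<longrightarrow> poly ((pderiv ^^ i) cutoff_right) 1 = 0"
  by (auto simp: cutoff_right_def eval_nat_numeral pderiv_pCons le_Suc_eq)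

lemma cutoff_right_at_3: "i \<le> 3 \<Longrightarrow> poly ((pderiv ^^ i) cutoff_right) 3 = 0"
  by (auto simp: cutoff_right_def eval_nat_numeral pderiv_pCons le_Suc_eq)

lemma cutoff_left_at_minus_1:
  "poly cutoff_left (-1) = 1" "\<forall>i. 1 \<le> i \<and> i \<le> 3 \<longrightarrow> poly ((pderiv ^^ i) cutoff_left) (-1) = 0"
  by (auto simp: cutoff_left_def eval_nat_numeral pderiv_pCons le_Suc_eq)

lemma cutoff_left_at_minus_3: "i \<le> 3 \<Longrightarrow> poly ((pderiv ^^ i) cutoff_left) (-3) = 0"
  by (auto simp: cutoff_left_def eval_nat_numeral pderiv_pCons le_Suc_eq)

text \<open>Hestenes' higher-order reflection across \<open>\<sigma> = \<plusminus>1\<close>: the point \<open>x\<close> outside \<open>[-1,1]\<close> is sent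
  to \<open>\<sigma> - (x - \<sigma>)/j\<close>, and the weights solve the Vandermonde system
  \<open>\<Sum>j. w j (-1/j)^m = 1\<close> for \<open>m \<le> 3\<close>, so that the reflected polynomial agrees with \<open>f\<close>
  to third order at \<open>\<sigma>\<close>.\<close>

definition reflect_weight :: "nat \<Rightarrow> real" where
  "reflect_weight j = (if j = 1 then -10 else if j = 2 then 160 else if j = 3 then -405 else 256)"

definition reflect :: "real \<Rightarrow> real poly \<Rightarrow> real poly" where
  "reflect \<sigma> f = (\<Sum>j\<in>{1..4::nat}. smult (reflect_weight j) (pcompose f [:\<sigma> * (1 + 1 / real j), - 1 / real j:]))"

lemma reflect_weight_moments:
  "m \<le> 3 \<Longrightarrow> (\<Sum>j\<in>{1..4::nat}. reflect_weight j * (- 1 / real j) ^ m) = 1"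
  by (auto simp: reflect_weight_def eval_nat_numeral le_Suc_eq)

lemma poly_higher_pderiv_reflect:
  "poly ((pderiv ^^ i) (reflect \<sigma> f)) x =
    (\<Sum>j\<in>{1..4::nat}. reflect_weight j * (- 1 / real j) ^ i
       * poly ((pderiv ^^ i) f) (\<sigma> * (1 + 1 / real j) - (1 / real j) * x))"
  unfolding reflect_def higher_pderiv_sum higher_pderiv_smult higher_pderiv_pcompose_linear
  by (simp add: poly_sum poly_pcompose algebra_simps)

lemma poly_higher_pderiv_reflect_at_center:
  assumes "m \<le> 3"
  shows "poly ((pderiv ^^ m) (reflect \<sigma> f)) \<sigma> = poly ((pderiv ^^ m) f) \<sigma>"
proof -
  have "poly ((pderiv ^^ m) (reflect \<sigma> f)) \<sigma>
      = (\<Sum>j\<in>{1..4::nat}. reflect_weight j * (- 1 / real j) ^ m) * poly ((pderiv ^^ m) f) \<sigma>"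
    unfolding poly_higher_pderiv_reflect sum_distrib_right
    by (intro sum.cong refl) (simp add: algebra_simps)
  then show ?thesis using reflect_weight_moments[OF assms] by simp
qed

lemma reflect_add: "reflect \<sigma> (p + q) = reflect \<sigma> p + reflect \<sigma> q"
  unfolding reflect_def by (simp add: pcompose_add smult_add_right sum.distrib)

lemma reflect_smult: "reflect \<sigma> (smult c p) = smult c (reflect \<sigma> p)"
  by (rule poly_ext) (simp add: reflect_def poly_sum poly_pcompose sum_distrib_left algebra_simps)

lemma reflect_argument_in_range:
  assumes "(\<sigma> = 1 \<and> a = 1 \<and> b = 3) \<or> (\<sigma> = -1 \<and> a = -3 \<and> b = -1)" "j \<in> {1..4::nat}" "x \<in> {a..b}"
  shows "\<sigma> * (1 + 1 / real j) - (1 / real j) * x \<in> {-1..(1::real)}"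
proof -
  define t where "t = 1 / real j"
  have t: "0 < t" "t \<le> 1" using assms(2) by (auto simp: t_def)
  have "\<sigma> * (1 + 1 / real j) - (1 / real j) * x = \<sigma> - t * (x - \<sigma>)"
    using assms(2) unfolding t_def by (auto simp: field_simps)
  moreover have "\<bar>x - \<sigma>\<bar> \<le> 2" using assms(1,3) by auto
  then have "0 \<le> t * \<bar>x - \<sigma>\<bar>" "t * \<bar>x - \<sigma>\<bar> \<le> 2"
    using mult_mono[OF t(2)] t by fastforce+
  ultimately show ?thesis using assms(1,3) by (auto simp: abs_if algebra_simps split: if_splits)
qed

text \<open>\<open>r = 0, 1, 2\<close> index the pieces \<open>[-3,-1]\<close>, \<open>[-1,1]\<close>, \<open>[1,3]\<close> of the extension to \<open>[-3,3]\<close>.\<close>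

definition ext_piece :: "nat \<Rightarrow> real poly \<Rightarrow> real poly" where
  "ext_piece r f = (if r = 0 then cutoff_left * reflect (-1) f
                    else if r = 1 then f else cutoff_right * reflect 1 f)"

definition piece_lo :: "nat \<Rightarrow> real" where
  "piece_lo r = (if r = 0 then -3 else if r = 1 then -1 else 1)"

definition piece_hi :: "nat \<Rightarrow> real" where
  "piece_hi r = piece_lo r + 2"

lemma ext_piece_middle [simp]: "ext_piece 1 f = f" "ext_piece (Suc 0) f = f"
  by (simp_all add: ext_piece_def)

lemma ext_piece_add: "ext_piece r (p + q) = ext_piece r p + ext_piece r q"
  unfolding ext_piece_def by (simp add: reflect_add distrib_left)

lemma ext_piece_smult: "ext_piece r (smult c p) = smult c (ext_piece r p)"
  unfolding ext_piece_def by (simp add: reflect_smult)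

lemma ext_piece_matches:
  assumes "m \<le> 3"
  shows "poly ((pderiv ^^ m) (ext_piece 2 f)) 1 = poly ((pderiv ^^ m) f) 1"
    and "poly ((pderiv ^^ m) (ext_piece 0 f)) (-1) = poly ((pderiv ^^ m) f) (-1)"
proof -
  have "poly ((pderiv ^^ m) (cutoff_right * reflect 1 f)) 1 = poly ((pderiv ^^ m) (reflect 1 f)) 1"
    by (rule poly_higher_pderiv_mult_eq) (use cutoff_right_at_1 assms in auto)
  then show "poly ((pderiv ^^ m) (ext_piece 2 f)) 1 = poly ((pderiv ^^ m) f) 1"
    using poly_higher_pderiv_reflect_at_center[OF assms, of 1 f] by (simp add: ext_piece_def)
  have "poly ((pderiv ^^ m) (cutoff_left * reflect (-1) f)) (-1) = poly ((pderiv ^^ m) (reflect (-1) f)) (-1)"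
    by (rule poly_higher_pderiv_mult_eq) (use cutoff_left_at_minus_1 assms in auto)
  then show "poly ((pderiv ^^ m) (ext_piece 0 f)) (-1) = poly ((pderiv ^^ m) f) (-1)"
    using poly_higher_pderiv_reflect_at_center[OF assms, of "-1" f] by (simp add: ext_piece_def)
qed

lemma ext_piece_vanishes:
  assumes "m \<le> 3"
  shows "poly ((pderiv ^^ m) (ext_piece 2 f)) 3 = 0"
    and "poly ((pderiv ^^ m) (ext_piece 0 f)) (-3) = 0"
  unfolding ext_piece_def using assms
  by (auto intro!: poly_higher_pderiv_mult_eq_0 cutoff_right_at_3 cutoff_left_at_minus_3)

definition deriv_energy :: "nat \<Rightarrow> real poly \<Rightarrow> real" where
  "deriv_energy j f = integral {-1..1} (\<lambda>x. (poly ((pderiv ^^ j) f) x)\<^sup>2)"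

lemma poly_higher_pderiv_reflect_sq_le:
  "(poly ((pderiv ^^ i) (reflect \<sigma> f)) x)\<^sup>2 \<le>
    4 * (\<Sum>j\<in>{1..4::nat}. (reflect_weight j)\<^sup>2 * (poly ((pderiv ^^ i) f) (\<sigma> * (1 + 1 / real j) - (1 / real j) * x))\<^sup>2)"
  (is "_ \<le> 4 * (\<Sum>j\<in>_. (reflect_weight j)\<^sup>2 * (?z j)\<^sup>2)")
proof -
  have "((- 1 / real j) ^ i)\<^sup>2 \<le> 1" for j
    by (cases "j = 0") (simp_all add: power_le_one flip: power_mult power_mult_distrib)
  then have term_le: "(reflect_weight j * (- 1 / real j) ^ i * ?z j)\<^sup>2 \<le> (reflect_weight j)\<^sup>2 * (?z j)\<^sup>2" for j
    using mult_left_le[of "((- 1 / real j) ^ i)\<^sup>2" "(reflect_weight j)\<^sup>2 * (?z j)\<^sup>2"]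
    by (simp add: power_mult_distrib mult_ac)
  have "(poly ((pderiv ^^ i) (reflect \<sigma> f)) x)\<^sup>2 = (\<Sum>j\<in>{1..4::nat}. reflect_weight j * (- 1 / real j) ^ i * ?z j)\<^sup>2"
    unfolding poly_higher_pderiv_reflect ..
  also have "\<dots> \<le> (\<Sum>j\<in>{1..4::nat}. (reflect_weight j * (- 1 / real j) ^ i * ?z j)\<^sup>2) * 4"
    using sum_squared_le_sum_of_squares[of _ "{1..4::nat}"] by simp
  also have "\<dots> \<le> 4 * (\<Sum>j\<in>{1..4::nat}. (reflect_weight j)\<^sup>2 * (?z j)\<^sup>2)"
    using term_le by (simp add: sum_mono)
  finally show ?thesis .
qed

lemma integral_sq_reflected_le:
  assumes "(\<sigma> = 1 \<and> a = 1 \<and> b = 3) \<or> (\<sigma> = -1 \<and> a = -3 \<and> b = -1)" "j \<in> {1..4::nat}"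
  shows "integral {a..b} (\<lambda>x. (poly h (\<sigma> * (1 + 1 / real j) - (1 / real j) * x))\<^sup>2)
    \<le> real j * integral {-1..1} (\<lambda>x. (poly h x)\<^sup>2)"
proof -
  have ab: "a \<le> b" using assms by auto
  have range: "\<forall>x\<in>{a..b}. \<sigma> * (1 + 1 / real j) - (1 / real j) * x \<in> {-1..1}"
    using reflect_argument_in_range[OF assms(1,2)] by auto
  have "integral {a..b} (\<lambda>x. (poly h (\<sigma> * (1 + 1 / real j) - (1 / real j) * x))\<^sup>2) = real j *
      integral {\<sigma> * (1 + 1 / real j) - (1 / real j) * b..\<sigma> * (1 + 1 / real j) - (1 / real j) * a} (\<lambda>x. (poly h x)\<^sup>2)"
    using integral_comp_reflect_scale[where g = "\<lambda>x. (poly h x)\<^sup>2", OF _ _ ab range] assms(2)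
    by (simp add: continuous_intros)
  also have "\<dots> \<le> real j * integral {-1..1} (\<lambda>x. (poly h x)\<^sup>2)"
    using range ab
    by (intro mult_left_mono integral_subset_le) (auto intro!: integrable_Icc_if_continuous continuous_intros)
  finally show ?thesis .
qed

lemma reflect_energy_le:
  assumes "(\<sigma> = 1 \<and> a = 1 \<and> b = 3) \<or> (\<sigma> = -1 \<and> a = -3 \<and> b = -1)"
  shows "integral {a..b} (\<lambda>x. (poly ((pderiv ^^ i) (reflect \<sigma> f)) x)\<^sup>2)
     \<le> (4 * (\<Sum>j\<in>{1..4::nat}. (reflect_weight j)\<^sup>2 * real j)) * deriv_energy i f"
proof -
  define z where "z j x = poly ((pderiv ^^ i) f) (\<sigma> * (1 + 1 / real j) - (1 / real j) * x)" for j x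
  have z_cont: "continuous_on UNIV (\<lambda>x. (z j x)\<^sup>2)" for j unfolding z_def by (intro continuous_intros)
  have "integral {a..b} (\<lambda>x. (poly ((pderiv ^^ i) (reflect \<sigma> f)) x)\<^sup>2) \<le>
        integral {a..b} (\<lambda>x. 4 * (\<Sum>j\<in>{1..4::nat}. (reflect_weight j)\<^sup>2 * (z j x)\<^sup>2))"
    unfolding z_def using poly_higher_pderiv_reflect_sq_le
    by (intro integral_le) (auto intro!: integrable_Icc_if_continuous continuous_intros)
  also have "\<dots> = 4 * (\<Sum>j\<in>{1..4::nat}. (reflect_weight j)\<^sup>2 * integral {a..b} (\<lambda>x. (z j x)\<^sup>2))"
    by (subst integral_mult_right, subst integral_sum)
      (auto intro!: integrable_Icc_if_continuous continuous_intros z_cont)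
  also have "\<dots> \<le> 4 * (\<Sum>j\<in>{1..4::nat}. (reflect_weight j)\<^sup>2 * (real j * deriv_energy i f))"
    unfolding z_def deriv_energy_def using integral_sq_reflected_le[OF assms]
    by (intro mult_left_mono sum_mono) auto
  also have "\<dots> = (4 * (\<Sum>j\<in>{1..4::nat}. (reflect_weight j)\<^sup>2 * real j)) * deriv_energy i f"
    by (simp add: sum_distrib_left sum_distrib_right mult_ac)
  finally show ?thesis .
qed

text \<open>\<open>piece_pair F G f g\<close> is the \<open>L\<^sup>2(-3,3)\<close> pairing of two piecewise polynomials given piece by piece;
  \<open>ext_deriv k\<close> is the \<open>k\<close>-th derivative of the extension, \<open>mid_deriv k\<close> that of the extension by zero.\<close>

definition piece_pair ::
  "(nat \<Rightarrow> real poly \<Rightarrow> real poly) \<Rightarrow> (nat \<Rightarrow> real poly \<Rightarrow> real poly) \<Rightarrow> real poly \<Rightarrow> real poly \<Rightarrow> real" where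
  "piece_pair F G f g = (\<Sum>r<3. integral {piece_lo r..piece_hi r} (\<lambda>x. poly (F r f) x * poly (G r g) x))"

definition ext_deriv :: "nat \<Rightarrow> nat \<Rightarrow> real poly \<Rightarrow> real poly" where
  "ext_deriv k r f = (pderiv ^^ k) (ext_piece r f)"

definition mid_deriv :: "nat \<Rightarrow> nat \<Rightarrow> real poly \<Rightarrow> real poly" where
  "mid_deriv k r f = (if r = 1 then (pderiv ^^ k) f else 0)"

lemma sum_lessThan_3: "(\<Sum>r<(3::nat). h r) = h 0 + h 1 + (h 2 :: real)"
  by (simp add: eval_nat_numeral)

text \<open>The boundary terms cancel at \<open>\<plusminus>1\<close> by the matching conditions and vanish at \<open>\<plusminus>3\<close>.\<close>

lemma piece_pair_ext_deriv_by_parts: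
  assumes "k \<le> 3" "l \<le> 3"
  shows "piece_pair (ext_deriv k) (ext_deriv (Suc l)) f g = - piece_pair (ext_deriv (Suc k)) (ext_deriv l) f g"
proof -
  have by_parts: "integral {piece_lo r..piece_hi r} (\<lambda>x. poly (ext_deriv k r f) x * poly (ext_deriv (Suc l) r g) x)
      = poly (ext_deriv k r f) (piece_hi r) * poly (ext_deriv l r g) (piece_hi r)
        - poly (ext_deriv k r f) (piece_lo r) * poly (ext_deriv l r g) (piece_lo r)
        - integral {piece_lo r..piece_hi r} (\<lambda>x. poly (ext_deriv (Suc k) r f) x * poly (ext_deriv l r g) x)" for r
    unfolding ext_deriv_def funpow.simps comp_apply
    by (rule integral_poly_by_parts) (simp add: piece_hi_def)
  show ?thesis
    using ext_piece_matches[OF assms(1), of f] ext_piece_matches[OF assms(2), of g]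
      ext_piece_vanishes[OF assms(1), of f]
    unfolding piece_pair_def sum_lessThan_3 by_parts by (simp add: ext_deriv_def piece_lo_def piece_hi_def)
qed

lemma piece_pair_mid_deriv: "piece_pair (mid_deriv j) (mid_deriv j) f f = deriv_energy j f"
  by (simp add: piece_pair_def sum_lessThan_3 mid_deriv_def deriv_energy_def piece_lo_def piece_hi_def
      power2_eq_square)

lemma piece_pair_mid_deriv_le: "piece_pair (mid_deriv k) (mid_deriv k) f f \<le> piece_pair (ext_deriv k) (ext_deriv k) f f"
  using integral_sq_poly_nonneg[of "-3" "-1" "(pderiv ^^ k) (ext_piece 0 f)"]
    integral_sq_poly_nonneg[of 1 3 "(pderiv ^^ k) (ext_piece 2 f)"]
  by (simp add: piece_pair_def sum_lessThan_3 ext_deriv_def mid_deriv_def piece_lo_def piece_hi_def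
      power2_eq_square)

lemma outer_piece_energy_le:
  assumes "(\<sigma> = 1 \<and> a = 1 \<and> b = 3 \<and> \<rho> = cutoff_right) \<or> (\<sigma> = -1 \<and> a = -3 \<and> b = -1 \<and> \<rho> = cutoff_left)"
  shows "\<exists>K\<ge>0. \<forall>f. integral {a..b} (\<lambda>x. (poly ((pderiv ^^ m) (\<rho> * reflect \<sigma> f)) x)\<^sup>2)
           \<le> K * (\<Sum>j\<le>m. deriv_energy j f)"
proof -
  obtain K where K: "K \<ge> 0" "\<And>g. integral {a..b} (\<lambda>x. (poly ((pderiv ^^ m) (\<rho> * g)) x)\<^sup>2)
      \<le> K * (\<Sum>i\<le>m. integral {a..b} (\<lambda>x. (poly ((pderiv ^^ i) g) x)\<^sup>2))"
    using integral_sq_higher_pderiv_mult_le[where n = m and \<rho> = \<rho> and a = a and b = b]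
    unfolding sobolev_sq_def by auto
  define C where "C = 4 * (\<Sum>j\<in>{1..4::nat}. (reflect_weight j)\<^sup>2 * real j)"
  have "C \<ge> 0" unfolding C_def by (intro mult_nonneg_nonneg sum_nonneg) auto
  have "integral {a..b} (\<lambda>x. (poly ((pderiv ^^ m) (\<rho> * reflect \<sigma> f)) x)\<^sup>2) \<le> (K * C) * (\<Sum>j\<le>m. deriv_energy j f)" for f
  proof -
    have "integral {a..b} (\<lambda>x. (poly ((pderiv ^^ m) (\<rho> * reflect \<sigma> f)) x)\<^sup>2)
        \<le> K * (\<Sum>i\<le>m. integral {a..b} (\<lambda>x. (poly ((pderiv ^^ i) (reflect \<sigma> f)) x)\<^sup>2))" by (rule K(2))
    also have "\<dots> \<le> K * (\<Sum>i\<le>m. C * deriv_energy i f)"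
      using reflect_energy_le[of \<sigma> a b] assms K(1) unfolding C_def
      by (intro mult_left_mono sum_mono) auto
    finally show ?thesis by (simp add: sum_distrib_left mult_ac)
  qed
  then show ?thesis using K(1) \<open>C \<ge> 0\<close> by (intro exI[of _ "K * C"]) auto
qed

lemma ext_deriv_energy_le:
  "\<exists>K\<ge>0. \<forall>f. piece_pair (ext_deriv m) (ext_deriv m) f f \<le> K * (\<Sum>j\<le>m. deriv_energy j f)"
proof -
  obtain K0 where K0: "K0 \<ge> 0" "\<And>f. integral {-3..-1} (\<lambda>x. (poly ((pderiv ^^ m) (cutoff_left * reflect (-1) f)) x)\<^sup>2)
      \<le> K0 * (\<Sum>j\<le>m. deriv_energy j f)"
    using outer_piece_energy_le[of "-1" "-3" "-1" cutoff_left m] by auto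
  obtain K2 where K2: "K2 \<ge> 0" "\<And>f. integral {1..3} (\<lambda>x. (poly ((pderiv ^^ m) (cutoff_right * reflect 1 f)) x)\<^sup>2)
      \<le> K2 * (\<Sum>j\<le>m. deriv_energy j f)"
    using outer_piece_energy_le[of 1 1 3 cutoff_right m] by auto
  have "piece_pair (ext_deriv m) (ext_deriv m) f f \<le> (K0 + 1 + K2) * (\<Sum>j\<le>m. deriv_energy j f)" for f
  proof -
    have "deriv_energy m f \<le> (\<Sum>j\<le>m. deriv_energy j f)"
      by (rule member_le_sum) (auto simp: deriv_energy_def integral_sq_poly_nonneg)
    moreover have "piece_pair (ext_deriv m) (ext_deriv m) f f
        = integral {-3..-1} (\<lambda>x. (poly ((pderiv ^^ m) (cutoff_left * reflect (-1) f)) x)\<^sup>2)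
          + deriv_energy m f + integral {1..3} (\<lambda>x. (poly ((pderiv ^^ m) (cutoff_right * reflect 1 f)) x)\<^sup>2)"
      by (simp add: piece_pair_def sum_lessThan_3 ext_deriv_def deriv_energy_def piece_lo_def piece_hi_def
          power2_eq_square ext_piece_def)
    ultimately show ?thesis using K0(2)[of f] K2(2)[of f] by (simp add: algebra_simps)
  qed
  then show ?thesis using K0(1) K2(1) by (intro exI[of _ "K0 + 1 + K2"]) auto
qed

section \<open>Iterated integrals over rectangles\<close>

definition jointly_continuous :: "(real \<Rightarrow> real \<Rightarrow> real) \<Rightarrow> bool" where
  "jointly_continuous h \<longleftrightarrow> continuous_on UNIV (\<lambda>p. h (fst p) (snd p))"

lemma jointly_continuous_add:
  "jointly_continuous f \<Longrightarrow> jointly_continuous g \<Longrightarrow> jointly_continuous (\<lambda>x y. f x y + g x y)"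
  unfolding jointly_continuous_def by (intro continuous_intros)

lemma jointly_continuous_mult:
  "jointly_continuous f \<Longrightarrow> jointly_continuous g \<Longrightarrow> jointly_continuous (\<lambda>x y. f x y * g x y)"
  unfolding jointly_continuous_def by (intro continuous_intros)

lemma jointly_continuous_cmult: "jointly_continuous f \<Longrightarrow> jointly_continuous (\<lambda>x y. c * f x y)"
  unfolding jointly_continuous_def by (intro continuous_intros)

lemma jointly_continuous_section:
  assumes "jointly_continuous h"
  shows "continuous_on UNIV (h x)"
proof -
  have "continuous_on UNIV ((\<lambda>p. h (fst p) (snd p)) \<circ> (\<lambda>y. (x, y)))"
    using assms unfolding jointly_continuous_def
    by (intro continuous_on_compose) (auto intro!: continuous_intros intro: continuous_on_subset)
  then show ?thesis by (simp add: o_def)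
qed

lemma continuous_on_parametric_integral:
  assumes "jointly_continuous h"
  shows "continuous_on UNIV (\<lambda>x. integral {c..d} (h x))"
proof -
  have "continuous_on (UNIV \<times> cbox c d) (\<lambda>(x, t). h x t)"
    using assms unfolding jointly_continuous_def by (auto simp: case_prod_beta intro: continuous_on_subset)
  from integral_continuous_on_param[OF this] show ?thesis unfolding interval_cbox .
qed

lemma integrable_parametric_integral:
  "jointly_continuous h \<Longrightarrow> (\<lambda>x. integral {c..d} (h x)) integrable_on {a..b}"
  by (intro integrable_Icc_if_continuous continuous_on_parametric_integral)

lemma iterated_integral_add:
  assumes "jointly_continuous f" "jointly_continuous g"
  shows "integral {a..b} (\<lambda>x. integral {c..d} (\<lambda>y. f x y + g x y)) =
    integral {a..b} (\<lambda>x. integral {c..d} (\<lambda>y. f x y)) + integral {a..b} (\<lambda>x. integral {c..d} (\<lambda>y. g x y))"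
proof -
  have "(\<lambda>y. f x y) integrable_on {c..d}" "(\<lambda>y. g x y) integrable_on {c..d}" for x
    using assms by (auto intro!: integrable_Icc_if_continuous jointly_continuous_section)
  then show ?thesis
    using integrable_parametric_integral[OF assms(1)] integrable_parametric_integral[OF assms(2)]
    by (simp add: integral_add)
qed

lemma iterated_integral_sum:
  assumes "finite A" "\<And>t. t \<in> A \<Longrightarrow> jointly_continuous (h t)"
  shows "integral {a..b} (\<lambda>x. integral {c..d} (\<lambda>y. \<Sum>t\<in>A. h t x y))
       = (\<Sum>t\<in>A. integral {a..b} (\<lambda>x. integral {c..d} (\<lambda>y. h t x y)))"
  using assms
proof (induct A rule: finite_induct)
  case (insert t A)
  have "jointly_continuous (\<lambda>x y. \<Sum>t\<in>A. h t x y)"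
    using insert unfolding jointly_continuous_def by (intro continuous_intros) auto
  with insert show ?case by (simp add: iterated_integral_add)
qed simp

lemma iterated_integral_le:
  assumes "jointly_continuous f" "jointly_continuous g" "\<And>x y. f x y \<le> g x y"
  shows "integral {a..b} (\<lambda>x. integral {c..d} (\<lambda>y. f x y)) \<le> integral {a..b} (\<lambda>x. integral {c..d} (\<lambda>y. g x y))"
proof (rule integral_le)
  show "(\<lambda>x. integral {c..d} (\<lambda>y. f x y)) integrable_on {a..b}"
    "(\<lambda>x. integral {c..d} (\<lambda>y. g x y)) integrable_on {a..b}"
    using integrable_parametric_integral assms(1,2) by auto
  fix x
  have "(\<lambda>y. f x y) integrable_on {c..d}" "(\<lambda>y. g x y) integrable_on {c..d}"
    using assms by (auto intro!: integrable_Icc_if_continuous jointly_continuous_section)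
  then show "integral {c..d} (\<lambda>y. f x y) \<le> integral {c..d} (\<lambda>y. g x y)"
    using assms(3) by (intro integral_le) auto
qed

lemma iterated_integral_nonneg:
  assumes "jointly_continuous f" "\<And>x y. 0 \<le> f x y"
  shows "0 \<le> integral {a..b} (\<lambda>x. integral {c..d} (\<lambda>y. f x y))"
  using iterated_integral_le[of "\<lambda>x y. 0" f a b c d] assms by (simp add: jointly_continuous_def)

lemma iterated_integral_mult_le:
  assumes "jointly_continuous f" "jointly_continuous g"
  shows "integral {a..b} (\<lambda>x. integral {c..d} (\<lambda>y. f x y * g x y)) \<le>
    1/2 * integral {a..b} (\<lambda>x. integral {c..d} (\<lambda>y. f x y * f x y))
    + 1/2 * integral {a..b} (\<lambda>x. integral {c..d} (\<lambda>y. g x y * g x y))"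
proof -
  have ff: "jointly_continuous (\<lambda>x y. 1/2 * (f x y * f x y))"
    by (rule jointly_continuous_cmult[OF jointly_continuous_mult[OF assms(1) assms(1)]])
  have gg: "jointly_continuous (\<lambda>x y. 1/2 * (g x y * g x y))"
    by (rule jointly_continuous_cmult[OF jointly_continuous_mult[OF assms(2) assms(2)]])
  have "f x y * g x y \<le> 1/2 * (f x y * f x y) + 1/2 * (g x y * g x y)" for x y
    using sum_squares_ge_zero[of "f x y - g x y" 0] by (simp add: power2_eq_square algebra_simps)
  then have "integral {a..b} (\<lambda>x. integral {c..d} (\<lambda>y. f x y * g x y)) \<le>
      integral {a..b} (\<lambda>x. integral {c..d} (\<lambda>y. 1/2 * (f x y * f x y) + 1/2 * (g x y * g x y)))"
    using assms by (intro iterated_integral_le jointly_continuous_add ff gg jointly_continuous_mult)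
  then show ?thesis by (simp only: iterated_integral_add[OF ff gg]) simp
qed

lemma iterated_integral_swap:
  assumes "jointly_continuous h"
  shows "integral {a..b} (\<lambda>x. integral {c..d} (\<lambda>y. h x y)) = integral {c..d} (\<lambda>y. integral {a..b} (\<lambda>x. h x y))"
proof -
  have "continuous_on (cbox (a, c) (b, d)) (\<lambda>(x, y). h x y)"
    using assms unfolding jointly_continuous_def by (auto simp: case_prod_beta intro: continuous_on_subset)
  from integral_swap_continuous[OF this] show ?thesis unfolding interval_cbox .
qed

lemma integral_square_eq_iterated:
  fixes h :: "real \<times> real \<Rightarrow> real"
  assumes "continuous_on UNIV h"
  shows "integral sq h = integral {-1..1} (\<lambda>x. integral {-1..1} (\<lambda>y. h (x, y)))"
proof -
  have "integral sq h = integral (cbox (-1, -1) (1, 1)) h" unfolding sq_def by (rule integral_open_interval)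
  also have "\<dots> = integral (cbox (-1) 1) (\<lambda>x. integral (cbox (-1) 1) (\<lambda>y. h (x, y)))"
    by (rule integral_prod_continuous) (use assms in \<open>auto intro: continuous_on_subset\<close>)
  finally show ?thesis unfolding interval_cbox .
qed

section \<open>Tensor-product forms\<close>

definition linear_family :: "(nat \<Rightarrow> real poly \<Rightarrow> real poly) \<Rightarrow> bool" where
  "linear_family F \<longleftrightarrow> (\<forall>r p q. F r (p + q) = F r p + F r q) \<and> (\<forall>r c p. F r (smult c p) = smult c (F r p))"

lemma linear_family_sum:
  assumes "linear_family F"
  shows "F r (\<Sum>j\<in>A. smult (c j) (p j)) = (\<Sum>j\<in>A. smult (c j) (F r (p j)))"
proof -
  have "F r 0 = 0" using assms unfolding linear_family_def by (metis smult_0_left)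
  then show ?thesis
    using assms by (induct A rule: infinite_finite_induct) (auto simp: linear_family_def)
qed

lemma linear_family_ext_deriv: "linear_family (ext_deriv k)"
  unfolding linear_family_def ext_deriv_def
  by (simp add: ext_piece_add ext_piece_smult higher_pderiv_add higher_pderiv_smult)

lemma linear_family_mid_deriv: "linear_family (mid_deriv k)"
  unfolding linear_family_def mid_deriv_def by (simp add: higher_pderiv_add higher_pderiv_smult)

text \<open>For families \<open>F\<close>, \<open>H\<close> acting in \<open>x\<close> and \<open>y\<close>, \<open>tensor_eval F H a W r s\<close> is \<open>(F \<otimes> H) u\<close> on the
  rectangle \<open>r \<times> s\<close> of the \<open>3 \<times> 3\<close> grid on \<open>[-3,3]\<^sup>2\<close>, and \<open>tensor_pair\<close> is the resulting
  \<open>L\<^sup>2((-3,3)\<^sup>2)\<close> pairing of \<open>(F \<otimes> H) u\<close> with \<open>(G \<otimes> K) u\<close>.\<close>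

definition tensor_eval ::
  "(nat \<Rightarrow> real poly \<Rightarrow> real poly) \<Rightarrow> (nat \<Rightarrow> real poly \<Rightarrow> real poly) \<Rightarrow> (nat \<Rightarrow> nat \<Rightarrow> real)
    \<Rightarrow> nat \<Rightarrow> nat \<Rightarrow> nat \<Rightarrow> real \<Rightarrow> real \<Rightarrow> real" where
  "tensor_eval F H a W r s x y = (\<Sum>i\<le>W. \<Sum>j\<le>W. a i j * poly (F r (legendre i)) x * poly (H s (legendre j)) y)"

definition tensor_pair ::
  "(nat \<Rightarrow> real poly \<Rightarrow> real poly) \<Rightarrow> (nat \<Rightarrow> real poly \<Rightarrow> real poly) \<Rightarrow> (nat \<Rightarrow> real poly \<Rightarrow> real poly)
    \<Rightarrow> (nat \<Rightarrow> real poly \<Rightarrow> real poly) \<Rightarrow> (nat \<Rightarrow> nat \<Rightarrow> real) \<Rightarrow> nat \<Rightarrow> real" where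
  "tensor_pair F G H K a W = (\<Sum>r<3. \<Sum>s<3. integral {piece_lo r..piece_hi r} (\<lambda>x.
      integral {piece_lo s..piece_hi s} (\<lambda>y. tensor_eval F H a W r s x y * tensor_eval G K a W r s x y)))"

definition fiber_poly :: "(nat \<Rightarrow> real poly \<Rightarrow> real poly) \<Rightarrow> (nat \<Rightarrow> nat \<Rightarrow> real) \<Rightarrow> nat \<Rightarrow> nat \<Rightarrow> real \<Rightarrow> real poly" where
  "fiber_poly F a W r x = (\<Sum>j\<le>W. smult (\<Sum>i\<le>W. a i j * poly (F r (legendre i)) x) (legendre j))"

lemma tensor_eval_fiber:
  assumes "linear_family H"
  shows "tensor_eval F H a W r s x y = poly (H s (fiber_poly F a W r x)) y"
proof -
  have "poly (H s (fiber_poly F a W r x)) y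
      = (\<Sum>j\<le>W. (\<Sum>i\<le>W. a i j * poly (F r (legendre i)) x) * poly (H s (legendre j)) y)"
    unfolding fiber_poly_def linear_family_sum[OF assms] by (simp add: poly_sum)
  also have "\<dots> = tensor_eval F H a W r s x y"
    unfolding tensor_eval_def sum_distrib_right by (rule sum.swap)
  finally show ?thesis by simp
qed

lemma tensor_eval_transpose: "tensor_eval F H a W r s x y = tensor_eval H F (\<lambda>i j. a j i) W s r y x"
  unfolding tensor_eval_def by (subst sum.swap) (simp add: mult_ac)

lemma jointly_continuous_tensor_eval: "jointly_continuous (tensor_eval F H a W r s)"
  unfolding jointly_continuous_def tensor_eval_def by (intro continuous_intros)

lemma jointly_continuous_tensor_eval_mult:
  "jointly_continuous (\<lambda>x y. tensor_eval F H a W r s x y * tensor_eval G K a W r s x y)"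
  by (intro jointly_continuous_mult jointly_continuous_tensor_eval)

lemma piece_pair_fiber:
  "linear_family H \<Longrightarrow> linear_family K \<Longrightarrow>
    piece_pair H K (fiber_poly F a W r x) (fiber_poly G a W r x)
      = (\<Sum>s<3. integral {piece_lo s..piece_hi s} (\<lambda>y. tensor_eval F H a W r s x y * tensor_eval G K a W r s x y))"
  unfolding piece_pair_def by (simp add: tensor_eval_fiber)

lemma continuous_on_piece_pair_fiber:
  "linear_family H \<Longrightarrow> linear_family K \<Longrightarrow>
    continuous_on UNIV (\<lambda>x. piece_pair H K (fiber_poly F a W r x) (fiber_poly G a W r x))"
  unfolding piece_pair_fiber
  by (intro continuous_on_sum continuous_on_parametric_integral jointly_continuous_tensor_eval_mult)

lemma tensor_pair_fiber:
  "linear_family H \<Longrightarrow> linear_family K \<Longrightarrow> tensor_pair F G H K a W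
    = (\<Sum>r<3. integral {piece_lo r..piece_hi r} (\<lambda>x. piece_pair H K (fiber_poly F a W r x) (fiber_poly G a W r x)))"
  unfolding tensor_pair_def piece_pair_fiber
  by (subst integral_sum) (auto intro!: integrable_parametric_integral jointly_continuous_tensor_eval_mult)

lemma tensor_pair_transpose: "tensor_pair F G H K a W = tensor_pair H K F G (\<lambda>i j. a j i) W"
proof -
  have "tensor_pair F G H K a W = (\<Sum>r<3. \<Sum>s<3. integral {piece_lo s..piece_hi s} (\<lambda>y.
      integral {piece_lo r..piece_hi r} (\<lambda>x. tensor_eval F H a W r s x y * tensor_eval G K a W r s x y)))"
    unfolding tensor_pair_def by (simp add: iterated_integral_swap[OF jointly_continuous_tensor_eval_mult])
  then show ?thesis
    unfolding tensor_pair_def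
    by (subst (asm) sum.swap) (simp add: tensor_eval_transpose[of F H] tensor_eval_transpose[of G K])
qed

text \<open>One-dimensional identities and inequalities between the \<open>piece_pair\<close> forms lift to
  \<open>tensor_pair\<close>, acting on the \<open>y\<close>-factor through the fibres and on the \<open>x\<close>-factor by transposition.\<close>

lemma tensor_pair_by_parts_y:
  assumes "linear_family H" "linear_family K" "linear_family H'" "linear_family K'"
    and "\<And>f g. piece_pair H K f g = - piece_pair H' K' f g"
  shows "tensor_pair F G H K a W = - tensor_pair F G H' K' a W"
  unfolding tensor_pair_fiber[OF assms(1,2)] tensor_pair_fiber[OF assms(3,4)] assms(5) by (simp add: sum_negf)

lemma tensor_pair_by_parts_x:
  assumes "linear_family F" "linear_family G" "linear_family F'" "linear_family G'"
    and "\<And>f g. piece_pair F G f g = - piece_pair F' G' f g"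
  shows "tensor_pair F G H K a W = - tensor_pair F' G' H K a W"
  using tensor_pair_by_parts_y[OF assms, of H K "\<lambda>i j. a j i" W]
  by (simp add: tensor_pair_transpose[of _ _ H K])

lemma tensor_pair_mono_y:
  assumes "linear_family H" "finite T" "\<And>t. t \<in> T \<Longrightarrow> linear_family (H' t)"
    and "\<And>f. piece_pair H H f f \<le> (\<Sum>t\<in>T. c t * piece_pair (H' t) (H' t) f f)"
  shows "tensor_pair F F H H a W \<le> (\<Sum>t\<in>T. c t * tensor_pair F F (H' t) (H' t) a W)"
proof -
  let ?Q = "\<lambda>t r x. piece_pair (H' t) (H' t) (fiber_poly F a W r x) (fiber_poly F a W r x)"
  have cont: "continuous_on UNIV (?Q t r)" if "t \<in> T" for t r
    using assms(3)[OF that] by (intro continuous_on_piece_pair_fiber)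
  have "tensor_pair F F H H a W \<le> (\<Sum>r<3. integral {piece_lo r..piece_hi r} (\<lambda>x. \<Sum>t\<in>T. c t * ?Q t r x))"
    unfolding tensor_pair_fiber[OF assms(1,1)] using assms(1) cont
    by (intro sum_mono integral_le assms(4))
      (auto intro!: integrable_Icc_if_continuous continuous_on_piece_pair_fiber continuous_intros assms(3))
  also have "\<dots> = (\<Sum>r<3. \<Sum>t\<in>T. c t * integral {piece_lo r..piece_hi r} (?Q t r))"
    using cont assms(2) by (intro sum.cong refl, subst integral_sum)
      (auto intro!: integrable_Icc_if_continuous continuous_intros)
  also have "\<dots> = (\<Sum>t\<in>T. c t * tensor_pair F F (H' t) (H' t) a W)"
    by (subst sum.swap) (simp add: tensor_pair_fiber[OF assms(3) assms(3)] sum_distrib_left)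
  finally show ?thesis .
qed

lemma tensor_pair_mono_x:
  assumes "linear_family F" "finite T" "\<And>t. t \<in> T \<Longrightarrow> linear_family (F' t)"
    and "\<And>f. piece_pair F F f f \<le> (\<Sum>t\<in>T. c t * piece_pair (F' t) (F' t) f f)"
  shows "tensor_pair F F H H a W \<le> (\<Sum>t\<in>T. c t * tensor_pair (F' t) (F' t) H H a W)"
  using tensor_pair_mono_y[OF assms, of H "\<lambda>i j. a j i" W] by (simp add: tensor_pair_transpose[of _ _ H H])

lemma tensor_pair_abs_le:
  "\<bar>tensor_pair F G H K a W\<bar> \<le> 1/2 * tensor_pair F F H H a W + 1/2 * tensor_pair G G K K a W"
proof -
  let ?I = "\<lambda>f r s. integral {piece_lo r..piece_hi r} (\<lambda>x. integral {piece_lo s..piece_hi s} (\<lambda>y. f x y))"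
  let ?u = "tensor_eval F H a W" and ?v = "tensor_eval G K a W"
  let ?R = "\<lambda>r s. 1/2 * ?I (\<lambda>x y. ?u r s x y * ?u r s x y) r s + 1/2 * ?I (\<lambda>x y. ?v r s x y * ?v r s x y) r s"
  have "?I (\<lambda>x y. ?u r s x y * ?v r s x y) r s \<le> ?R r s" for r s
    by (intro iterated_integral_mult_le jointly_continuous_tensor_eval)
  moreover have "- ?I (\<lambda>x y. ?u r s x y * ?v r s x y) r s \<le> ?R r s" for r s
    using iterated_integral_mult_le[OF jointly_continuous_tensor_eval
        jointly_continuous_cmult[OF jointly_continuous_tensor_eval, where c = "-1"]]
    by simp
  ultimately have "tensor_pair F G H K a W \<le> 1/2 * tensor_pair F F H H a W + 1/2 * tensor_pair G G K K a W"
      "- tensor_pair F G H K a W \<le> 1/2 * tensor_pair F F H H a W + 1/2 * tensor_pair G G K K a W"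
    unfolding tensor_pair_def sum_distrib_left sum.distrib[symmetric] sum_negf[symmetric]
    by (intro sum_mono; simp)+
  then show ?thesis by linarith
qed

lemma tensor_pair_nonneg: "0 \<le> tensor_pair F F H H a W"
  unfolding tensor_pair_def
  by (intro sum_nonneg iterated_integral_nonneg jointly_continuous_tensor_eval_mult) simp

abbreviation ext_form :: "(nat \<Rightarrow> nat \<Rightarrow> real) \<Rightarrow> nat \<Rightarrow> nat \<Rightarrow> nat \<Rightarrow> nat \<Rightarrow> nat \<Rightarrow> real" where
  "ext_form a W k k' l l' \<equiv> tensor_pair (ext_deriv k) (ext_deriv k') (ext_deriv l) (ext_deriv l') a W"

lemma ext_form_by_parts_y:
  assumes "l \<le> 3" "l' \<le> 3"
  shows "tensor_pair F G (ext_deriv l) (ext_deriv (l' + 1)) a W = - tensor_pair F G (ext_deriv (l + 1)) (ext_deriv l') a W"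
  using tensor_pair_by_parts_y[OF linear_family_ext_deriv linear_family_ext_deriv linear_family_ext_deriv
      linear_family_ext_deriv piece_pair_ext_deriv_by_parts[OF assms]] by simp

lemma ext_form_by_parts_x:
  assumes "k \<le> 3" "k' \<le> 3"
  shows "tensor_pair (ext_deriv k) (ext_deriv (k' + 1)) H K a W = - tensor_pair (ext_deriv (k + 1)) (ext_deriv k') H K a W"
  using tensor_pair_by_parts_x[OF linear_family_ext_deriv linear_family_ext_deriv linear_family_ext_deriv
      linear_family_ext_deriv piece_pair_ext_deriv_by_parts[OF assms]] by simp

lemma ext_form_mixed_1_1: "ext_form a W 1 1 1 1 = ext_form a W 0 2 2 0"
  using ext_form_by_parts_y[of 1 0 "ext_deriv 1" "ext_deriv 1" a W]
    ext_form_by_parts_x[of 0 1 "ext_deriv 2" "ext_deriv 0" a W]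
  by (simp add: eval_nat_numeral)

lemma ext_form_mixed_2_1: "ext_form a W 2 2 1 1 = - ext_form a W 0 4 2 0"
  using ext_form_by_parts_y[of 1 0 "ext_deriv 2" "ext_deriv 2" a W]
    ext_form_by_parts_x[of 1 2 "ext_deriv 2" "ext_deriv 0" a W]
    ext_form_by_parts_x[of 0 3 "ext_deriv 2" "ext_deriv 0" a W]
  by (simp add: eval_nat_numeral)

lemma ext_form_mixed_1_2: "ext_form a W 1 1 2 2 = - ext_form a W 0 2 4 0"
  using ext_form_by_parts_x[of 0 1 "ext_deriv 2" "ext_deriv 2" a W]
    ext_form_by_parts_y[of 2 1 "ext_deriv 0" "ext_deriv 2" a W]
    ext_form_by_parts_y[of 3 0 "ext_deriv 0" "ext_deriv 2" a W]
  by (simp add: eval_nat_numeral)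

lemma ext_form_mixed_2_2: "ext_form a W 2 2 2 2 = ext_form a W 0 4 4 0"
  using ext_form_by_parts_y[of 2 1 "ext_deriv 2" "ext_deriv 2" a W]
    ext_form_by_parts_y[of 3 0 "ext_deriv 2" "ext_deriv 2" a W]
    ext_form_by_parts_x[of 1 2 "ext_deriv 4" "ext_deriv 0" a W]
    ext_form_by_parts_x[of 0 3 "ext_deriv 4" "ext_deriv 0" a W]
  by (simp add: eval_nat_numeral)

lemma ext_form_mixed_3_1: "ext_form a W 3 3 1 1 = ext_form a W 2 4 2 0"
  using ext_form_by_parts_y[of 1 0 "ext_deriv 3" "ext_deriv 3" a W]
    ext_form_by_parts_x[of 2 3 "ext_deriv 2" "ext_deriv 0" a W]
  by (simp add: eval_nat_numeral)

lemma ext_form_mixed_1_3: "ext_form a W 1 1 3 3 = ext_form a W 0 2 4 2"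
  using ext_form_by_parts_x[of 0 1 "ext_deriv 3" "ext_deriv 3" a W]
    ext_form_by_parts_y[of 3 2 "ext_deriv 0" "ext_deriv 2" a W]
  by (simp add: eval_nat_numeral)

section \<open>The quadratic forms B and C\<close>

definition partial_norm_sq :: "nat \<Rightarrow> (nat \<Rightarrow> nat \<Rightarrow> real) \<Rightarrow> nat \<Rightarrow> nat \<Rightarrow> real" where
  "partial_norm_sq W a k l = integral {-1..1} (\<lambda>x. integral {-1..1} (\<lambda>y. (legD W a k l (x, y))\<^sup>2))"

definition mixed_indices :: "(nat \<times> nat) set" where
  "mixed_indices = {(k, l). 1 \<le> k \<and> 1 \<le> l \<and> k + l \<le> 4}"

lemma mixed_indices_eq: "mixed_indices = {(1, 1), (1, 2), (1, 3), (2, 1), (2, 2), (3, 1)}"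
  unfolding mixed_indices_def by auto

lemma jointly_continuous_legD_sq: "jointly_continuous (\<lambda>x y. (legD W a k l (x, y))\<^sup>2)"
  unfolding jointly_continuous_def legD_def by (intro continuous_intros)

lemma partial_norm_sq_nonneg: "0 \<le> partial_norm_sq W a k l"
  unfolding partial_norm_sq_def by (rule iterated_integral_nonneg[OF jointly_continuous_legD_sq]) simp

lemma formB_eq: "formB W a = (\<Sum>k\<le>4. \<Sum>l\<le>4 - k. partial_norm_sq W a k l)"
proof -
  have "formB W a = integral {-1..1} (\<lambda>x. integral {-1..1} (\<lambda>y. \<Sum>k\<le>4. \<Sum>l\<le>4 - k. (legD W a k l (x, y))\<^sup>2))"
    unfolding formB_def by (subst integral_square_eq_iterated) (auto simp: legD_def intro!: continuous_intros)
  also have "\<dots> = (\<Sum>k\<le>4. \<Sum>l\<le>4 - k. partial_norm_sq W a k l)"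
    unfolding partial_norm_sq_def
    by (subst iterated_integral_sum; (intro sum.cong refl iterated_integral_sum)?)
      (auto intro!: jointly_continuous_legD_sq simp: jointly_continuous_def legD_def intro!: continuous_intros)
  finally show ?thesis .
qed

lemma formC_eq: "formC W a = partial_norm_sq W a 0 0 + (\<Sum>k\<in>{1..4}. partial_norm_sq W a k 0 + partial_norm_sq W a 0 k)"
proof -
  have "formC W a = integral {-1..1} (\<lambda>x. integral {-1..1} (\<lambda>y. (legD W a 0 0 (x, y))\<^sup>2 +
      (\<Sum>k\<in>{1..4}. (legD W a k 0 (x, y))\<^sup>2 + (legD W a 0 k (x, y))\<^sup>2)))"
    unfolding formC_def by (subst integral_square_eq_iterated) (auto simp: legD_def intro!: continuous_intros)
  also have "\<dots> = partial_norm_sq W a 0 0 + (\<Sum>k\<in>{1..4}. partial_norm_sq W a k 0 + partial_norm_sq W a 0 k)"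
    unfolding partial_norm_sq_def
    by (subst iterated_integral_add iterated_integral_sum,
        auto intro!: jointly_continuous_add jointly_continuous_legD_sq
          simp: jointly_continuous_def legD_def intro!: continuous_intros)+
  finally show ?thesis .
qed

lemma formB_eq_formC_plus_mixed: "formB W a = formC W a + (\<Sum>(k, l)\<in>mixed_indices. partial_norm_sq W a k l)"
  unfolding formB_eq formC_eq mixed_indices_eq by (simp add: eval_nat_numeral atMost_Suc atLeastAtMostSuc_conv)

lemma pure_norms_le_formC:
  assumes "m \<le> 4"
  shows "(\<Sum>j\<le>m. partial_norm_sq W a j 0) \<le> formC W a" "(\<Sum>j\<le>m. partial_norm_sq W a 0 j) \<le> formC W a"
proof -
  have "(\<Sum>j\<le>m. partial_norm_sq W a j 0) \<le> (\<Sum>j\<le>4. partial_norm_sq W a j 0)"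
    "(\<Sum>j\<le>m. partial_norm_sq W a 0 j) \<le> (\<Sum>j\<le>4. partial_norm_sq W a 0 j)"
    using assms by (auto intro!: sum_mono2 partial_norm_sq_nonneg)
  moreover have "(\<Sum>j\<le>4. partial_norm_sq W a j 0) \<le> formC W a" "(\<Sum>j\<le>4. partial_norm_sq W a 0 j) \<le> formC W a"
    unfolding formC_eq using partial_norm_sq_nonneg[of W a]
    by (simp_all add: eval_nat_numeral atMost_Suc atLeastAtMostSuc_conv add_increasing2)
  ultimately show "(\<Sum>j\<le>m. partial_norm_sq W a j 0) \<le> formC W a" "(\<Sum>j\<le>m. partial_norm_sq W a 0 j) \<le> formC W a"
    by linarith+
qed

lemma tensor_pair_mid_deriv:
  "tensor_pair (mid_deriv k) (mid_deriv k) (mid_deriv l) (mid_deriv l) a W = partial_norm_sq W a k l"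
  unfolding tensor_pair_def partial_norm_sq_def sum_lessThan_3
  by (simp add: tensor_eval_def mid_deriv_def piece_lo_def piece_hi_def legD_def power2_eq_square)

lemma partial_norm_sq_le_ext_form: "partial_norm_sq W a k l \<le> ext_form a W k k l l"
proof -
  have le: "piece_pair (mid_deriv n) (mid_deriv n) f f \<le> (\<Sum>t\<in>{0::nat}. 1 * piece_pair (ext_deriv n) (ext_deriv n) f f)"
    for n f by (simp add: piece_pair_mid_deriv_le)
  have "partial_norm_sq W a k l \<le> (\<Sum>t\<in>{0::nat}. 1 * tensor_pair (mid_deriv k) (mid_deriv k) (ext_deriv l) (ext_deriv l) a W)"
    unfolding tensor_pair_mid_deriv[symmetric]
    by (rule tensor_pair_mono_y[where H' = "\<lambda>_. ext_deriv l", OF linear_family_mid_deriv _ linear_family_ext_deriv le]) simp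
  also have "\<dots> \<le> (\<Sum>t\<in>{0::nat}. 1 * ext_form a W k k l l)"
    using tensor_pair_mono_x[where F' = "\<lambda>_. ext_deriv k", OF linear_family_mid_deriv _ linear_family_ext_deriv le]
    by simp
  finally show ?thesis by simp
qed

lemma piece_pair_ext_deriv_le_mid_deriv:
  "\<exists>K\<ge>0. \<forall>f. piece_pair (ext_deriv m) (ext_deriv m) f f \<le> (\<Sum>t\<le>m. K * piece_pair (mid_deriv t) (mid_deriv t) f f)"
  using ext_deriv_energy_le[of m] by (simp add: piece_pair_mid_deriv flip: sum_distrib_left)

lemma ext_form_pure_le:
  "\<exists>K\<ge>0. \<forall>W a. ext_form a W m m 0 0 \<le> K * (\<Sum>j\<le>m. partial_norm_sq W a j 0)
              \<and> ext_form a W 0 0 m m \<le> K * (\<Sum>j\<le>m. partial_norm_sq W a 0 j)"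
proof -
  obtain K0 where K0: "K0 \<ge> 0" "\<And>f. piece_pair (ext_deriv 0) (ext_deriv 0) f f
      \<le> (\<Sum>t\<le>0. K0 * piece_pair (mid_deriv t) (mid_deriv t) f f)"
    using piece_pair_ext_deriv_le_mid_deriv[of 0] by blast
  obtain Km where Km: "Km \<ge> 0" "\<And>f. piece_pair (ext_deriv m) (ext_deriv m) f f
      \<le> (\<Sum>t\<le>m. Km * piece_pair (mid_deriv t) (mid_deriv t) f f)"
    using piece_pair_ext_deriv_le_mid_deriv[of m] by blast
  have "ext_form a W m m 0 0 \<le> K0 * Km * (\<Sum>j\<le>m. partial_norm_sq W a j 0)" for W a
  proof -
    have "ext_form a W m m 0 0 \<le> K0 * tensor_pair (ext_deriv m) (ext_deriv m) (mid_deriv 0) (mid_deriv 0) a W"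
      using tensor_pair_mono_y[OF linear_family_ext_deriv _ linear_family_mid_deriv K0(2)] by simp
    also have "\<dots> \<le> K0 * (\<Sum>t\<le>m. Km * tensor_pair (mid_deriv t) (mid_deriv t) (mid_deriv 0) (mid_deriv 0) a W)"
      using tensor_pair_mono_x[OF linear_family_ext_deriv _ linear_family_mid_deriv Km(2)] K0(1)
      by (intro mult_left_mono) auto
    finally show ?thesis by (simp add: tensor_pair_mid_deriv sum_distrib_left mult_ac)
  qed
  moreover have "ext_form a W 0 0 m m \<le> K0 * Km * (\<Sum>j\<le>m. partial_norm_sq W a 0 j)" for W a
  proof -
    have "ext_form a W 0 0 m m \<le> K0 * tensor_pair (mid_deriv 0) (mid_deriv 0) (ext_deriv m) (ext_deriv m) a W"
      using tensor_pair_mono_x[OF linear_family_ext_deriv _ linear_family_mid_deriv K0(2)] by simp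
    also have "\<dots> \<le> K0 * (\<Sum>t\<le>m. Km * tensor_pair (mid_deriv 0) (mid_deriv 0) (mid_deriv t) (mid_deriv t) a W)"
      using tensor_pair_mono_y[OF linear_family_ext_deriv _ linear_family_mid_deriv Km(2)] K0(1)
      by (intro mult_left_mono) auto
    finally show ?thesis by (simp add: tensor_pair_mid_deriv sum_distrib_left mult_ac)
  qed
  ultimately show ?thesis using K0(1) Km(1) by (intro exI[of _ "K0 * Km"]) auto
qed

lemma ext_form_mixed_le_pure:
  assumes "(k, l) \<in> mixed_indices"
  shows "ext_form a W k k l l
    \<le> ext_form a W 2 2 0 0 + ext_form a W 4 4 0 0 + ext_form a W 0 0 2 2 + ext_form a W 0 0 4 4"
proof -
  have pure_nonneg: "0 \<le> ext_form a W m m 0 0" "0 \<le> ext_form a W 0 0 m m" for m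
    by (rule tensor_pair_nonneg)+
  have mixed_2_2: "ext_form a W 2 2 2 2 \<le> 1/2 * ext_form a W 0 0 4 4 + 1/2 * ext_form a W 4 4 0 0"
    using ext_form_mixed_2_2[of a W] tensor_pair_abs_le[of "ext_deriv 0" "ext_deriv 4" "ext_deriv 4" "ext_deriv 0" a W]
    by (simp add: abs_le_iff)
  from assms consider "k = 1" "l = 1" | "k = 1" "l = 2" | "k = 1" "l = 3"
    | "k = 2" "l = 1" | "k = 2" "l = 2" | "k = 3" "l = 1"
    unfolding mixed_indices_eq by blast
  then show ?thesis
  proof cases
    case 1
    show ?thesis using ext_form_mixed_1_1[of a W] pure_nonneg[of 2] pure_nonneg[of 4]
        tensor_pair_abs_le[of "ext_deriv 0" "ext_deriv 2" "ext_deriv 2" "ext_deriv 0" a W]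
      unfolding abs_le_iff 1 by linarith
  next
    case 2
    show ?thesis using ext_form_mixed_1_2[of a W] pure_nonneg[of 2] pure_nonneg[of 4]
        tensor_pair_abs_le[of "ext_deriv 0" "ext_deriv 2" "ext_deriv 4" "ext_deriv 0" a W]
      unfolding abs_le_iff 2 by linarith
  next
    case 3
    show ?thesis using ext_form_mixed_1_3[of a W] pure_nonneg[of 2] pure_nonneg[of 4] mixed_2_2
        tensor_pair_abs_le[of "ext_deriv 0" "ext_deriv 2" "ext_deriv 4" "ext_deriv 2" a W]
      unfolding abs_le_iff 3 by linarith
  next
    case 4
    show ?thesis using ext_form_mixed_2_1[of a W] pure_nonneg[of 2] pure_nonneg[of 4]
        tensor_pair_abs_le[of "ext_deriv 0" "ext_deriv 4" "ext_deriv 2" "ext_deriv 0" a W]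
      unfolding abs_le_iff 4 by linarith
  next
    case 5
    show ?thesis using mixed_2_2 pure_nonneg[of 2] pure_nonneg[of 4] unfolding 5 by linarith
  next
    case 6
    show ?thesis using ext_form_mixed_3_1[of a W] pure_nonneg[of 2] pure_nonneg[of 4] mixed_2_2
        tensor_pair_abs_le[of "ext_deriv 2" "ext_deriv 4" "ext_deriv 2" "ext_deriv 0" a W]
      unfolding abs_le_iff 6 by linarith
  qed
qed

lemma mixed_partial_norm_sq_le_formC:
  "\<exists>Q\<ge>0. \<forall>W a k l. (k, l) \<in> mixed_indices \<longrightarrow> partial_norm_sq W a k l \<le> Q * formC W a"
proof -
  obtain K2 where K2: "K2 \<ge> 0" "\<And>W a. ext_form a W 2 2 0 0 \<le> K2 * (\<Sum>j\<le>2. partial_norm_sq W a j 0)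
      \<and> ext_form a W 0 0 2 2 \<le> K2 * (\<Sum>j\<le>2. partial_norm_sq W a 0 j)"
    using ext_form_pure_le[of 2] by blast
  obtain K4 where K4: "K4 \<ge> 0" "\<And>W a. ext_form a W 4 4 0 0 \<le> K4 * (\<Sum>j\<le>4. partial_norm_sq W a j 0)
      \<and> ext_form a W 0 0 4 4 \<le> K4 * (\<Sum>j\<le>4. partial_norm_sq W a 0 j)"
    using ext_form_pure_le[of 4] by blast
  have "partial_norm_sq W a k l \<le> (2 * K2 + 2 * K4) * formC W a" if "(k, l) \<in> mixed_indices" for W a k l
  proof -
    have "K2 * (\<Sum>j\<le>2. partial_norm_sq W a j 0) \<le> K2 * formC W a" "K2 * (\<Sum>j\<le>2. partial_norm_sq W a 0 j) \<le> K2 * formC W a"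
      "K4 * (\<Sum>j\<le>4. partial_norm_sq W a j 0) \<le> K4 * formC W a" "K4 * (\<Sum>j\<le>4. partial_norm_sq W a 0 j) \<le> K4 * formC W a"
      using pure_norms_le_formC[of 2 W a] pure_norms_le_formC[of 4 W a] K2(1) K4(1)
      by (simp_all add: mult_left_mono)
    then show ?thesis
      using partial_norm_sq_le_ext_form[of W a k l] ext_form_mixed_le_pure[OF that, of a W] K2(2)[of a W] K4(2)[of a W]
      by (simp add: algebra_simps)
  qed
  then show ?thesis using K2(1) K4(1) by (intro exI[of _ "2 * K2 + 2 * K4"]) auto
qed

theorem theorem2p2:
  shows "\<exists>M::real. M > 0 \<and>
    (\<forall>W::nat. W \<ge> 1 \<longrightarrow> (\<forall>a :: nat \<Rightarrow> nat \<Rightarrow> real.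
       formB W a / M \<le> formC W a \<and> formC W a \<le> formB W a))"
proof -
  obtain Q where Q: "Q \<ge> 0" "\<And>W a k l. (k, l) \<in> mixed_indices \<Longrightarrow> partial_norm_sq W a k l \<le> Q * formC W a"
    using mixed_partial_norm_sq_le_formC by blast
  have "formB W a / (1 + 6 * Q) \<le> formC W a \<and> formC W a \<le> formB W a" for W a
  proof
    have "(\<Sum>(k, l)\<in>mixed_indices. partial_norm_sq W a k l) \<le> of_nat (card mixed_indices) * (Q * formC W a)"
      using Q(2) by (intro sum_bounded_above) auto
    then have "formB W a \<le> (1 + 6 * Q) * formC W a"
      unfolding formB_eq_formC_plus_mixed by (simp add: mixed_indices_eq algebra_simps)
    then show "formB W a / (1 + 6 * Q) \<le> formC W a"
      using Q(1) by (simp add: divide_le_eq mult.commute)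
    show "formC W a \<le> formB W a"
      unfolding formB_eq_formC_plus_mixed by (simp add: sum_nonneg partial_norm_sq_nonneg split_beta)
  qed
  then show ?thesis using Q(1) by (intro exI[of _ "1 + 6 * Q"]) auto
qed

end
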